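(* Let $(X,f)$ be a dynamical system. If $(X,f)$ is $\Delta$-transitive with respect to $(1,2)$, then $(X,f)$ is weakly mixing.
   Context: A dynamical system is a pair $(X,f)$ with $X$ a compact metric space and $f:X\to X$ continuous. For a system $(Y,g)$, a point $y$ is a transitive point if its $\omega$-limit set equals $Y$; $(Y,g)$ is transitive if for all non-empty open $U,V\subset Y$ there is $n\in\mathbb{N}$ with $U\cap g^{-n}(V)\neq\emptyset$. $(X,f)$ is weakly mixing if $(X\times X,f\times f)$ is transitive. $(X,f)$ is $\Delta$-transitive with respect to $(1,2)$ if there is $x\in X$ such that $(x,x)$ is a transitive point of $(X\times X,f\times f^2)$. *)

theory Defs
  imports "HOL-Analysis.Analysis"
begin

definition dyn_system :: "'a::metric_space set \<Rightarrow> ('a \<Rightarrow> 'a) \<Rightarrow> bool" where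
  "dyn_system X f \<longleftrightarrow> compact X \<and> continuous_on X f \<and> f ` X \<subseteq> X"

definition omega_limit :: "('a::topological_space \<Rightarrow> 'a) \<Rightarrow> 'a \<Rightarrow> 'a set" where
  "omega_limit g y = {z. \<forall>U. open U \<and> z \<in> U \<longrightarrow> (\<exists>\<^sub>F n in sequentially. (g ^^ n) y \<in> U)}"

definition transitive_point :: "'a::topological_space set \<Rightarrow> ('a \<Rightarrow> 'a) \<Rightarrow> 'a \<Rightarrow> bool" where
  "transitive_point Y g y \<longleftrightarrow> y \<in> Y \<and> omega_limit g y = Y"

definition top_transitive :: "'a::topological_space set \<Rightarrow> ('a \<Rightarrow> 'a) \<Rightarrow> bool" where
  "top_transitive Y g \<longleftrightarrow>
     (\<forall>U V. openin (top_of_set Y) U \<and> openin (top_of_set Y) V \<and> U \<noteq> {} \<and> V \<noteq> {} \<longrightarrow>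
        (\<exists>n\<ge>1. U \<inter> {x \<in> Y. (g ^^ n) x \<in> V} \<noteq> {}))"

definition weakly_mixing :: "'a::metric_space set \<Rightarrow> ('a \<Rightarrow> 'a) \<Rightarrow> bool" where
  "weakly_mixing X f \<longleftrightarrow> top_transitive (X \<times> X) (\<lambda>(x, y). (f x, f y))"

definition delta_transitive_12 :: "'a::metric_space set \<Rightarrow> ('a \<Rightarrow> 'a) \<Rightarrow> bool" where
  "delta_transitive_12 X f \<longleftrightarrow>
     (\<exists>x\<in>X. transitive_point (X \<times> X) (\<lambda>(u, v). (f u, (f ^^ 2) v)) (x, x))"

end

theory Submission
  imports Defs
begin

text \<open>Let \<open>x\<close> be a point whose diagonal \<open>(x, x)\<close> is transitive for \<open>f \<times> f\<^sup>2\<close>, so that for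
  any non-empty open \<open>A\<close>, \<open>B\<close> there are arbitrarily large \<open>n\<close> with \<open>f\<^sup>n x \<in> A\<close> and
  \<open>f\<^sup>2\<^sup>n x \<in> B\<close>. To see that \<open>f \<times> f\<close> is transitive it suffices to find, for non-empty
  open \<open>U\<^sub>1, U\<^sub>2, V\<^sub>1, V\<^sub>2\<close>, one time \<open>n\<close> with \<open>U\<^sub>1 \<inter> f\<^sup>-\<^sup>n V\<^sub>1\<close> and \<open>U\<^sub>2 \<inter> f\<^sup>-\<^sup>n V\<^sub>2\<close> both
  non-empty. If \<open>f\<^sup>n x \<in> U\<^sub>1 \<inter> f\<^sup>-\<^sup>j V\<^sub>2\<close>, \<open>f\<^sup>2\<^sup>n x \<in> V\<^sub>1\<close> and \<open>f\<^sup>j x \<in> U\<^sub>2\<close>, then \<open>p = f\<^sup>n x\<close>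
  and \<open>q = f\<^sup>j x\<close> do the job, since \<open>f\<^sup>n q = f\<^sup>j (f\<^sup>n x)\<close>. It remains to find \<open>j\<close> with
  \<open>f\<^sup>j x \<in> U\<^sub>2\<close> and \<open>U\<^sub>1 \<inter> f\<^sup>-\<^sup>j V\<^sub>2 \<noteq> {}\<close>; this is one more application of the
  recurrence, to the open sets \<open>U\<^sub>2 \<inter> f\<^sup>-\<^sup>t U\<^sub>1\<close> and \<open>f\<^sup>-\<^sup>t V\<^sub>2\<close>, where \<open>t\<close> is a transfer time
  from \<open>U\<^sub>2\<close> to \<open>U\<^sub>1\<close> read off the orbit of \<open>x\<close>.\<close>

lemma funpow_map_prod:
  fixes f :: "'a \<Rightarrow> 'a" and g :: "'b \<Rightarrow> 'b"
  shows "((\<lambda>(u, v). (f u, g v)) ^^ n) (x, y) = ((f ^^ n) x, (g ^^ n) y)"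
  by (induction n) auto

lemma funpow_apply_commute: "(f ^^ m) ((f ^^ n) x) = (f ^^ n) ((f ^^ m) x)"
  by (metis add.commute comp_apply funpow_add)

lemma funpow_image_subset: "f ` X \<subseteq> X \<Longrightarrow> (f ^^ n) ` X \<subseteq> X"
  by (induction n) auto

lemma continuous_on_funpow:
  assumes "continuous_on X f" "f ` X \<subseteq> X"
  shows "continuous_on X (f ^^ n)"
proof (induction n)
  case 0
  then show ?case by (simp add: continuous_on_id)
next
  case (Suc n)
  then show ?case
    using continuous_on_compose2[OF assms(1) Suc] funpow_image_subset[OF assms(2)]
    by (simp add: o_def)
qed

lemma transitive_point_product_recurrence:
  assumes "transitive_point (X \<times> Y) (\<lambda>(u, v). (f u, g v)) (x, y)"
    and "f ` X \<subseteq> X" "g ` Y \<subseteq> Y"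
    and "openin (top_of_set X) A" "A \<noteq> {}" "openin (top_of_set Y) B" "B \<noteq> {}"
  shows "\<exists>n\<ge>N. (f ^^ n) x \<in> A \<and> (g ^^ n) y \<in> B"
proof -
  obtain A' B' where A': "open A'" "A = X \<inter> A'" and B': "open B'" "B = Y \<inter> B'"
    using assms(4,6) by (auto simp: openin_open)
  obtain a b where "a \<in> A" "b \<in> B"
    using assms(5,7) by blast
  then have "(a, b) \<in> omega_limit (\<lambda>(u, v). (f u, g v)) (x, y)" "(a, b) \<in> A' \<times> B'"
    using assms(1) A' B' by (auto simp: transitive_point_def)
  then have "\<exists>\<^sub>F n in sequentially. ((\<lambda>(u, v). (f u, g v)) ^^ n) (x, y) \<in> A' \<times> B'"
    unfolding omega_limit_def using open_Times[OF A'(1) B'(1)] by blast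
  then have "\<exists>\<^sub>F n in sequentially. ((f ^^ n) x, (g ^^ n) y) \<in> A' \<times> B'"
    by (simp only: funpow_map_prod)
  then obtain n where "n \<ge> N" "(f ^^ n) x \<in> A'" "(g ^^ n) y \<in> B'"
    by (auto simp: frequently_sequentially)
  moreover have "x \<in> X" "y \<in> Y"
    using assms(1) by (auto simp: transitive_point_def)
  ultimately show ?thesis
    using A' B' funpow_image_subset[OF assms(2)] funpow_image_subset[OF assms(3)] by blast
qed

lemma weakly_mixingI:
  assumes "\<And>U\<^sub>1 U\<^sub>2 V\<^sub>1 V\<^sub>2. openin (top_of_set X) U\<^sub>1 \<Longrightarrow> openin (top_of_set X) U\<^sub>2 \<Longrightarrow>
      openin (top_of_set X) V\<^sub>1 \<Longrightarrow> openin (top_of_set X) V\<^sub>2 \<Longrightarrow>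
      U\<^sub>1 \<noteq> {} \<Longrightarrow> U\<^sub>2 \<noteq> {} \<Longrightarrow> V\<^sub>1 \<noteq> {} \<Longrightarrow> V\<^sub>2 \<noteq> {} \<Longrightarrow>
      \<exists>n\<ge>1. U\<^sub>1 \<inter> (f ^^ n) -` V\<^sub>1 \<noteq> {} \<and> U\<^sub>2 \<inter> (f ^^ n) -` V\<^sub>2 \<noteq> {}"
  shows "weakly_mixing X f"
  unfolding weakly_mixing_def top_transitive_def
proof (intro allI impI)
  fix U V
  assume UV: "openin (top_of_set (X \<times> X)) U \<and> openin (top_of_set (X \<times> X)) V \<and> U \<noteq> {} \<and> V \<noteq> {}"
  then have "openin (top_of_set (X \<times> X)) U" "openin (top_of_set (X \<times> X)) V"
    by blast+
  obtain u\<^sub>1 u\<^sub>2 v\<^sub>1 v\<^sub>2 where "(u\<^sub>1, u\<^sub>2) \<in> U" "(v\<^sub>1, v\<^sub>2) \<in> V"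
    using UV by auto
  obtain U\<^sub>1 U\<^sub>2 where U: "openin (top_of_set X) U\<^sub>1" "u\<^sub>1 \<in> U\<^sub>1"
    "openin (top_of_set X) U\<^sub>2" "u\<^sub>2 \<in> U\<^sub>2" "U\<^sub>1 \<times> U\<^sub>2 \<subseteq> U"
    using Times_in_interior_subtopology[OF \<open>(u\<^sub>1, u\<^sub>2) \<in> U\<close> \<open>openin _ U\<close>] by blast
  obtain V\<^sub>1 V\<^sub>2 where V: "openin (top_of_set X) V\<^sub>1" "v\<^sub>1 \<in> V\<^sub>1"
    "openin (top_of_set X) V\<^sub>2" "v\<^sub>2 \<in> V\<^sub>2" "V\<^sub>1 \<times> V\<^sub>2 \<subseteq> V"
    using Times_in_interior_subtopology[OF \<open>(v\<^sub>1, v\<^sub>2) \<in> V\<close> \<open>openin _ V\<close>] by blast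
  have "\<exists>n\<ge>1. U\<^sub>1 \<inter> (f ^^ n) -` V\<^sub>1 \<noteq> {} \<and> U\<^sub>2 \<inter> (f ^^ n) -` V\<^sub>2 \<noteq> {}"
    using U V by (intro assms) auto
  then obtain n p q where "n \<ge> 1" "p \<in> U\<^sub>1" "(f ^^ n) p \<in> V\<^sub>1" "q \<in> U\<^sub>2" "(f ^^ n) q \<in> V\<^sub>2"
    by blast
  moreover have "U\<^sub>1 \<subseteq> X" "U\<^sub>2 \<subseteq> X"
    using U(1,3) by (auto dest: openin_imp_subset)
  ultimately have "(p, q) \<in> U \<inter> {z \<in> X \<times> X. ((\<lambda>(x, y). (f x, f y)) ^^ n) z \<in> V}"
    using U(5) V(5) by (auto simp: funpow_map_prod)
  with \<open>n \<ge> 1\<close> show "\<exists>n\<ge>1. U \<inter> {z \<in> X \<times> X. ((\<lambda>(x, y). (f x, f y)) ^^ n) z \<in> V} \<noteq> {}"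
    by blast
qed

locale diagonal_recurrence =
  fixes X :: "'a::topological_space set" and f :: "'a \<Rightarrow> 'a" and x :: 'a
  assumes continuous: "continuous_on X f"
    and maps_into: "f ` X \<subseteq> X"
    and base_point: "x \<in> X"
    and recurrence: "\<And>A B N. openin (top_of_set X) A \<Longrightarrow> A \<noteq> {} \<Longrightarrow>
      openin (top_of_set X) B \<Longrightarrow> B \<noteq> {} \<Longrightarrow> \<exists>n\<ge>N. (f ^^ n) x \<in> A \<and> (f ^^ (2 * n)) x \<in> B"
begin

lemma orbit_in: "(f ^^ n) x \<in> X"
  using funpow_image_subset[OF maps_into] base_point by blast

lemma openin_Int_preimage:
  assumes "openin (top_of_set X) U" "openin (top_of_set X) V"
  shows "openin (top_of_set X) (U \<inter> (f ^^ k) -` V)"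
proof -
  have "openin (top_of_set X) (X \<inter> (f ^^ k) -` V)"
    using continuous_openin_preimage[OF continuous_on_funpow[OF continuous maps_into]]
      funpow_image_subset[OF maps_into] assms(2) by blast
  then have "openin (top_of_set X) (U \<inter> (X \<inter> (f ^^ k) -` V))"
    using assms(1) by blast
  moreover have "U \<inter> (X \<inter> (f ^^ k) -` V) = U \<inter> (f ^^ k) -` V"
    using openin_imp_subset[OF assms(1)] by blast
  ultimately show ?thesis
    by simp
qed

lemma orbit_visits:
  assumes "openin (top_of_set X) A" "A \<noteq> {}"
  shows "\<exists>n\<ge>N. (f ^^ n) x \<in> A"
  using recurrence[OF assms openin_subtopology_self] base_point by blast

lemma transfer_time:
  assumes "openin (top_of_set X) U" "U \<noteq> {}" "openin (top_of_set X) V" "V \<noteq> {}"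
  shows "\<exists>t. U \<inter> (f ^^ t) -` V \<noteq> {}"
proof -
  obtain a where a: "(f ^^ a) x \<in> U"
    using orbit_visits[OF assms(1,2)] by blast
  obtain b where b: "b \<ge> a" "(f ^^ b) x \<in> V"
    using orbit_visits[OF assms(3,4)] by blast
  have "(f ^^ (b - a)) ((f ^^ a) x) = (f ^^ b) x"
    using b(1) by (metis comp_apply funpow_add le_add_diff_inverse2)
  then show ?thesis
    using a b(2) by blast
qed

lemma preimage_nonempty:
  assumes "openin (top_of_set X) V" "V \<noteq> {}"
  shows "X \<inter> (f ^^ t) -` V \<noteq> {}"
proof -
  obtain s where s: "s \<ge> t" "(f ^^ s) x \<in> V"
    using orbit_visits[OF assms] by blast
  have "(f ^^ t) ((f ^^ (s - t)) x) = (f ^^ s) x"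
    using s(1) by (metis comp_apply funpow_add le_add_diff_inverse)
  then show ?thesis
    using orbit_in s(2) by blast
qed

text \<open>The witness is \<open>f\<^sup>t (f\<^sup>j x)\<close>: for \<open>j\<close> chosen by the recurrence it lies in \<open>U\<^sub>1\<close>, and
  its image under \<open>f\<^sup>j\<close> is \<open>f\<^sup>t (f\<^sup>2\<^sup>j x) \<in> V\<^sub>2\<close>.\<close>

lemma second_factor_return:
  assumes "openin (top_of_set X) U\<^sub>1" "U\<^sub>1 \<noteq> {}" "openin (top_of_set X) U\<^sub>2" "U\<^sub>2 \<noteq> {}"
    and "openin (top_of_set X) V\<^sub>2" "V\<^sub>2 \<noteq> {}"
  shows "\<exists>j. (f ^^ j) x \<in> U\<^sub>2 \<and> U\<^sub>1 \<inter> (f ^^ j) -` V\<^sub>2 \<noteq> {}"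
proof -
  obtain t where "U\<^sub>2 \<inter> (f ^^ t) -` U\<^sub>1 \<noteq> {}"
    using transfer_time[OF assms(3,4,1,2)] by blast
  moreover have "X \<inter> (f ^^ t) -` V\<^sub>2 \<noteq> {}"
    using preimage_nonempty[OF assms(5,6)] .
  ultimately obtain j where j: "(f ^^ j) x \<in> U\<^sub>2 \<inter> (f ^^ t) -` U\<^sub>1" "(f ^^ (2 * j)) x \<in> X \<inter> (f ^^ t) -` V\<^sub>2"
    using recurrence[OF openin_Int_preimage[OF assms(3,1)] _
        openin_Int_preimage[OF openin_subtopology_self assms(5)]] by blast
  have "(f ^^ j) ((f ^^ t) ((f ^^ j) x)) = (f ^^ t) ((f ^^ (2 * j)) x)"
    by (simp add: funpow_apply_commute[where m = j and n = t] mult_2 funpow_add)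
  then have "(f ^^ t) ((f ^^ j) x) \<in> U\<^sub>1 \<inter> (f ^^ j) -` V\<^sub>2"
    using j by auto
  with j show ?thesis
    by blast
qed

lemma common_return_time:
  assumes "openin (top_of_set X) U\<^sub>1" "U\<^sub>1 \<noteq> {}" "openin (top_of_set X) U\<^sub>2" "U\<^sub>2 \<noteq> {}"
    and "openin (top_of_set X) V\<^sub>1" "V\<^sub>1 \<noteq> {}" "openin (top_of_set X) V\<^sub>2" "V\<^sub>2 \<noteq> {}"
  shows "\<exists>n\<ge>1. U\<^sub>1 \<inter> (f ^^ n) -` V\<^sub>1 \<noteq> {} \<and> U\<^sub>2 \<inter> (f ^^ n) -` V\<^sub>2 \<noteq> {}"
proof -
  obtain j where j: "(f ^^ j) x \<in> U\<^sub>2" "U\<^sub>1 \<inter> (f ^^ j) -` V\<^sub>2 \<noteq> {}"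
    using second_factor_return[OF assms(1-4,7,8)] by blast
  obtain n where n: "n \<ge> 1" "(f ^^ n) x \<in> U\<^sub>1 \<inter> (f ^^ j) -` V\<^sub>2" "(f ^^ (2 * n)) x \<in> V\<^sub>1"
    using recurrence[OF openin_Int_preimage[OF assms(1,7)] j(2) assms(5,6)] by blast
  have "(f ^^ n) ((f ^^ n) x) \<in> V\<^sub>1"
    using n(3) by (simp add: mult_2 funpow_add)
  moreover have "(f ^^ n) ((f ^^ j) x) \<in> V\<^sub>2"
    using n(2) by (simp add: funpow_apply_commute)
  ultimately show ?thesis
    using n j(1) by blast
qed

end

theorem lemma5p4:
  fixes X :: "'a::metric_space set" and f :: "'a \<Rightarrow> 'a"
  assumes "dyn_system X f"
    and "delta_transitive_12 X f"
  shows "weakly_mixing X f"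
proof -
  have f: "continuous_on X f" "f ` X \<subseteq> X"
    using assms(1) by (auto simp: dyn_system_def)
  obtain x where x: "transitive_point (X \<times> X) (\<lambda>(u, v). (f u, (f ^^ 2) v)) (x, x)"
    using assms(2) by (auto simp: delta_transitive_12_def)
  have "diagonal_recurrence X f x"
  proof
    show "x \<in> X"
      using x by (simp add: transitive_point_def)
    show "\<exists>n\<ge>N. (f ^^ n) x \<in> A \<and> (f ^^ (2 * n)) x \<in> B"
      if "openin (top_of_set X) A" "A \<noteq> {}" "openin (top_of_set X) B" "B \<noteq> {}" for A B N
      using transitive_point_product_recurrence[OF x f(2) funpow_image_subset[OF f(2)] that]
      by (simp add: funpow_mult)
  qed (use f in auto)
  then show ?thesis
    by (intro weakly_mixingI) (rule diagonal_recurrence.common_return_time)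
qed

end
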